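(* Let $\mathcal{I}$ be a hyperspectral image whose pixel-centred cuboids $B$ (each labelled by the class $y\in\mathcal{Y}=\{1,\dots,K\}$ of its central pixel) are partitioned into a training set $\mathcal{D}_{\text{train}}$ and the remaining cuboids, with the remaining cuboids randomly split into a calibration set $\{(B_i,y_i)\}_{i=1}^n$ and a test set. Let $S$ be a non-conformity score function derived from an HSI classifier trained on $\mathcal{D}_{\text{train}}$, such that for every cuboid $B$ and label $y$, $S(B,y)$ is invariant under any permutation of the union of the calibration and test sets. Fix $\lambda\in[0,1]$ and define the Score Aggregation Operator recursively by $\mathcal{V}_0=S$ and, for $k\ge1$, $$\mathcal{V}_k(B_i,y)=(1-\lambda)\mathcal{V}_{k-1}(B_i,y)+\frac{\lambda}{|\mathcal{N}_i|}\sum_{B_j\in\mathcal{N}_i}\mathcal{V}_{k-1}(B_j,y),$$ where $\mathcal{N}_i$ is the set of neighbouring cuboids around the central pixel of $B_i$ that are not in $\mathcal{D}_{\text{train}}$. Fix an integer $k\ge0$, let $(B_{n+1},y_{n+1})$ be a sample from the test set, set $\hat s_i:=\mathcal{V}_k(B_i,y_i)$ for $i=1,\dots,n$, and for $\alpha\in(0,1)$ let $$\hat\tau=\inf\Big\{s\ \Big|\ \frac{|\{i:\hat s_i\le s\}|}{n}\ge\frac{\lceil (n+1)(1-\alpha)\rceil}{n}\Big\},\qquad \hat{\mathcal{C}}_{1-\alpha}(B_{n+1};\hat\tau):=\{y\in\mathcal{Y}\mid \mathcal{V}_k(B_{n+1},y)\le\hat\tau\}.$$ Then $$\mathbb{P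}\big(y_{n+1}\in\hat{\mathcal{C}}_{1-\alpha}(B_{n+1};\hat\tau)\big)\ge1-\alpha.$$
   Context: A cuboid $B\in\mathbb{R}^{P\times P\times U}$ is the $P\times P$ spatial patch of the image (with all $U$ spectral bands) centred at a pixel. A non-conformity score function $S(B,y)$ assigns a real number measuring how poorly label $y$ conforms to the classifier's prediction at $B$. The infimum of the empty set is $+\infty$. *)

theory Defs
  imports "HOL-Probability.Probability" "HOL-Combinatorics.Multiset_Permutations"
begin

fun SAO :: "real \<Rightarrow> ('b \<Rightarrow> 'b set) \<Rightarrow> ('b \<Rightarrow> nat \<Rightarrow> real) \<Rightarrow> nat \<Rightarrow> 'b \<Rightarrow> nat \<Rightarrow> real" where
  "SAO lam N S 0 b y = S b y"
| "SAO lam N S (Suc k) b y =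
     (1 - lam) * SAO lam N S k b y
     + lam / real (card (N b)) * (\<Sum>b'\<in>N b. SAO lam N S k b' y)"

text \<open>Conformal threshold tau-hat from calibration scores s_0..s_(n-1) (infimum in ereal,
  Inf of empty set = +infinity).\<close>
definition conf_threshold :: "nat \<Rightarrow> (nat \<Rightarrow> real) \<Rightarrow> real \<Rightarrow> ereal" where
  "conf_threshold n s \<alpha> =
     Inf {ereal t | t. real (card {i. i < n \<and> s i \<le> t}) / real n
                       \<ge> real_of_int \<lceil>real (n + 1) * (1 - \<alpha>)\<rceil> / real n}"

definition pred_set :: "nat \<Rightarrow> (nat \<Rightarrow> real) \<Rightarrow> ereal \<Rightarrow> nat set" where
  "pred_set K V \<tau> = {y \<in> {1..K}. ereal (V y) \<le> \<tau>}"

end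

theory Submission
  imports Defs
begin

text \<open>Since the base score is the same for every ordering of the calibration and test cuboids,
  the aggregated scores are a fixed function of the cuboid, and under a uniformly random
  ordering the \<open>n + 1\<close> scores of the calibration cuboids and the test cuboid are exchangeable.
  If the test label is not covered, the test score exceeds the empirical quantile, so at least
  \<open>q = \<lceil>(n + 1)(1 - \<alpha>)\<rceil>\<close> of the \<open>n + 1\<close> scores lie strictly below it. Swapping the test
  position with any calibration position shows that every position has the same probability of
  this event, while in any fixed ordering at most \<open>n + 1 - q\<close> positions have \<open>q\<close> scores strictly
  below them. Hence the miscoverage probability is at most \<open>(n + 1 - q) / (n + 1) \<le> \<alpha>\<close>.\<close>

definition strict_rank :: "('a \<Rightarrow> real) \<Rightarrow> nat \<Rightarrow> 'a list \<Rightarrow> nat \<Rightarrow> nat" where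
  "strict_rank f n xs j = card {i. i \<le> n \<and> f (xs ! i) < f (xs ! j)}"

lemma card_rank_ge_le:
  fixes v :: "'a \<Rightarrow> 'b::linorder"
  assumes "finite I"
  shows "card {j\<in>I. q \<le> card {i\<in>I. v i < v j}} \<le> card I - q"
proof -
  define J where "J = {j\<in>I. q \<le> card {i\<in>I. v i < v j}}"
  have "card J \<le> card I - q"
  proof (cases "J = {}")
    case False
    define j0 where "j0 = arg_min_on v J"
    have "finite J" using assms unfolding J_def by simp
    then have j0: "j0 \<in> J" "\<And>j. j \<in> J \<Longrightarrow> v j0 \<le> v j"
      using arg_min_if_finite[of J v] False unfolding j0_def by (auto simp: not_less)
    define L where "L = {i\<in>I. v i < v j0}"
    have "q \<le> card L" using j0(1) unfolding J_def L_def by simp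
    moreover have "J \<inter> L = {}" using j0(2) unfolding L_def by force
    then have "card J + card L \<le> card I"
      using assms by (subst card_Un_disjoint[symmetric]) (auto simp: J_def L_def intro: card_mono)
    ultimately show ?thesis by linarith
  qed simp
  then show ?thesis unfolding J_def .
qed

lemma bij_betw_permute_list_permutations_of_set:
  assumes "\<sigma> permutes {..<card U}"
  shows "bij_betw (permute_list \<sigma>) (permutations_of_set U) (permutations_of_set U)"
proof (rule bij_betw_byWitness[where f' = "permute_list (inv \<sigma>)"])
  have perm: "\<sigma> permutes {..<length xs}" "inv \<sigma> permutes {..<length xs}"
    if "xs \<in> permutations_of_set U" for xs
    using assms permutes_inv length_finite_permutations_of_set[OF that] by auto
  show "\<forall>xs\<in>permutations_of_set U. permute_list (inv \<sigma>) (permute_list \<sigma> xs) = xs"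
  proof
    fix xs assume "xs \<in> permutations_of_set U"
    then have "permute_list (inv \<sigma>) (permute_list \<sigma> xs) = permute_list (\<sigma> \<circ> inv \<sigma>) xs"
      by (intro permute_list_compose[symmetric] perm)
    then show "permute_list (inv \<sigma>) (permute_list \<sigma> xs) = xs"
      using permutes_inv_o(1)[OF assms] by simp
  qed
  show "\<forall>xs\<in>permutations_of_set U. permute_list \<sigma> (permute_list (inv \<sigma>) xs) = xs"
  proof
    fix xs assume "xs \<in> permutations_of_set U"
    then have "permute_list \<sigma> (permute_list (inv \<sigma>) xs) = permute_list (inv \<sigma> \<circ> \<sigma>) xs"
      by (intro permute_list_compose[symmetric] perm)
    then show "permute_list \<sigma> (permute_list (inv \<sigma>) xs) = xs"
      using permutes_inv_o(2)[OF assms] by simp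
  qed
  have closed: "permute_list \<tau> xs \<in> permutations_of_set U"
    if "xs \<in> permutations_of_set U" "\<tau> permutes {..<length xs}" for \<tau> xs
    using that by (simp add: permutations_of_set_def)
  show "permute_list \<sigma> ` permutations_of_set U \<subseteq> permutations_of_set U"
    "permute_list (inv \<sigma>) ` permutations_of_set U \<subseteq> permutations_of_set U"
    using closed perm by blast+
qed

lemma strict_rank_permute_list:
  assumes "\<sigma> permutes {..n}" "n < length xs"
  shows "strict_rank f n (permute_list \<sigma> xs) n = strict_rank f n xs (\<sigma> n)"
proof -
  have "\<sigma> permutes {..<length xs}" using assms by (auto intro: permutes_subset)
  then have nth: "permute_list \<sigma> xs ! i = xs ! \<sigma> i" if "i \<le> n" for i
    using that assms(2) by (simp add: permute_list_nth)
  have le: "\<sigma> i \<le> n \<longleftrightarrow> i \<le> n" for i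
    using permutes_in_image[OF assms(1)] by simp
  have "strict_rank f n (permute_list \<sigma> xs) n
      = card (\<sigma> -` {i. i \<le> n \<and> f (xs ! i) < f (xs ! \<sigma> n)})"
    unfolding strict_rank_def using nth
    by (intro arg_cong[where f = card] set_eqI) (simp add: le cong: conj_cong)
  also have "\<dots> = strict_rank f n xs (\<sigma> n)"
    unfolding strict_rank_def using assms(1)
    by (intro card_vimage_inj) (auto simp: permutes_inj permutes_surj)
  finally show ?thesis .
qed

lemma card_Collect_eq_sum_of_bool:
  "finite A \<Longrightarrow> card {x \<in> A. P x} = (\<Sum>x\<in>A. of_bool (P x))"
  by (simp add: Int_def)

lemma card_strict_rank_ge_swap_eq:
  assumes "j \<le> n" "n < card U"
  shows "card {xs \<in> permutations_of_set U. q \<le> strict_rank f n xs j}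
       = card {xs \<in> permutations_of_set U. q \<le> strict_rank f n xs n}"
proof -
  define P where "P = permutations_of_set U"
  define \<sigma> where "\<sigma> = Transposition.transpose n j"
  have \<sigma>: "\<sigma> permutes {..n}"
    unfolding \<sigma>_def using assms(1) by (intro permutes_swap_id) auto
  have "finite P" unfolding P_def by simp
  have "card {xs \<in> P. q \<le> strict_rank f n xs j} = (\<Sum>xs\<in>P. of_bool (q \<le> strict_rank f n xs j))"
    using \<open>finite P\<close> by (rule card_Collect_eq_sum_of_bool)
  also have "\<dots> = (\<Sum>xs\<in>P. of_bool (q \<le> strict_rank f n (permute_list \<sigma> xs) n))"
  proof (rule sum.cong)
    fix xs assume "xs \<in> P"
    then have "n < length xs"
      using length_finite_permutations_of_set[of xs U] assms(2) unfolding P_def by simp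
    moreover have "\<sigma> n = j" unfolding \<sigma>_def by simp
    ultimately show "of_bool (q \<le> strict_rank f n xs j)
        = of_bool (q \<le> strict_rank f n (permute_list \<sigma> xs) n)"
      using strict_rank_permute_list[OF \<sigma>, of xs f] by simp
  qed simp
  also have "\<dots> = (\<Sum>xs\<in>P. of_bool (q \<le> strict_rank f n xs n))"
    unfolding P_def using \<sigma> assms(2)
    by (intro sum.reindex_bij_betw bij_betw_permute_list_permutations_of_set)
      (auto intro: permutes_subset)
  also have "\<dots> = card {xs \<in> P. q \<le> strict_rank f n xs n}"
    using \<open>finite P\<close> by (rule card_Collect_eq_sum_of_bool[symmetric])
  finally show ?thesis unfolding P_def .
qed

lemma card_strict_rank_ge_last_le:
  assumes "finite U" "n < card U"
  defines "P \<equiv> permutations_of_set U"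
  shows "(n + 1) * card {xs \<in> P. q \<le> strict_rank f n xs n} \<le> card P * (n + 1 - q)"
proof -
  have "(n + 1) * card {xs \<in> P. q \<le> strict_rank f n xs n}
      = (\<Sum>j\<le>n. card {xs \<in> P. q \<le> strict_rank f n xs n})"
    by simp
  also have "\<dots> = (\<Sum>j\<le>n. card {xs \<in> P. q \<le> strict_rank f n xs j})"
    unfolding P_def using assms(2)
    by (intro sum.cong refl card_strict_rank_ge_swap_eq[symmetric]) auto
  also have "\<dots> = (\<Sum>j\<le>n. \<Sum>xs\<in>P. of_bool (q \<le> strict_rank f n xs j))"
    unfolding P_def by (simp add: card_Collect_eq_sum_of_bool)
  also have "\<dots> = (\<Sum>xs\<in>P. \<Sum>j\<le>n. of_bool (q \<le> strict_rank f n xs j))"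
    by (rule sum.swap)
  also have "\<dots> = (\<Sum>xs\<in>P. card {j \<in> {..n}. q \<le> strict_rank f n xs j})"
    by (intro sum.cong refl card_Collect_eq_sum_of_bool[symmetric]) simp
  also have "\<dots> \<le> (\<Sum>xs\<in>P. n + 1 - q)"
    using card_rank_ge_le[of "{..n}"] unfolding strict_rank_def by (intro sum_mono) simp
  finally show ?thesis by simp
qed

lemma prob_strict_rank_ge_last_le:
  assumes "finite U" "n < card U"
  shows "measure_pmf.prob (pmf_of_set (permutations_of_set U)) {xs. q \<le> strict_rank f n xs n}
           \<le> real (n + 1 - q) / real (n + 1)"
proof -
  define P where "P = permutations_of_set U"
  have P: "P \<noteq> {}" "finite P" using assms(1) unfolding P_def by simp_all
  have "(n + 1) * card (P \<inter> {xs. q \<le> strict_rank f n xs n}) \<le> card P * (n + 1 - q)"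
    using card_strict_rank_ge_last_le[OF assms, of q f] unfolding P_def by (simp add: Int_def)
  then have "real (n + 1) * real (card (P \<inter> {xs. q \<le> strict_rank f n xs n}))
      \<le> real (card P) * real (n + 1 - q)"
    by (metis of_nat_le_iff of_nat_mult)
  moreover have "0 < card P" using P by (simp add: card_gt_0_iff)
  ultimately show ?thesis
    unfolding P_def[symmetric] measure_pmf_of_set[OF P] by (simp add: field_simps)
qed

lemma card_less_ge_of_conf_threshold_less:
  assumes "conf_threshold n s \<alpha> < ereal (s n)" "0 < n"
  shows "nat \<lceil>real (n + 1) * (1 - \<alpha>)\<rceil> \<le> card {i. i \<le> n \<and> s i < s n}"
proof -
  obtain t where t: "t < s n"
    "real_of_int \<lceil>real (n + 1) * (1 - \<alpha>)\<rceil> / real n \<le> real (card {i. i < n \<and> s i \<le> t}) / real n"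
    using assms(1) unfolding conf_threshold_def Inf_less_iff by auto
  then have "nat \<lceil>real (n + 1) * (1 - \<alpha>)\<rceil> \<le> card {i. i < n \<and> s i \<le> t}"
    using assms(2) by (simp add: divide_le_cancel) linarith
  also have "\<dots> \<le> card {i. i \<le> n \<and> s i < s n}"
    using t(1) by (intro card_mono) auto
  finally show ?thesis .
qed

lemma diff_nat_ceiling_mult_div_le:
  fixes \<alpha> :: real
  assumes "0 \<le> \<alpha>" "\<alpha> \<le> 1"
  shows "real (m - nat \<lceil>real m * (1 - \<alpha>)\<rceil>) / real m \<le> \<alpha>"
proof -
  have "real (m - nat \<lceil>real m * (1 - \<alpha>)\<rceil>) \<le> real m * \<alpha>"
  proof (cases "nat \<lceil>real m * (1 - \<alpha>)\<rceil> \<le> m")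
    case True
    have "0 \<le> real m * (1 - \<alpha>)" using assms by simp
    then have "real (nat \<lceil>real m * (1 - \<alpha>)\<rceil>) = real_of_int \<lceil>real m * (1 - \<alpha>)\<rceil>" by simp
    moreover have "real m * \<alpha> = real m - real m * (1 - \<alpha>)" by (simp add: algebra_simps)
    ultimately show ?thesis
      using of_nat_diff[OF True, where 'a = real] le_of_int_ceiling[of "real m * (1 - \<alpha>)"]
      by linarith
  next
    case False
    then have "m - nat \<lceil>real m * (1 - \<alpha>)\<rceil> = 0" by linarith
    then show ?thesis using assms by simp
  qed
  then show ?thesis using assms by (cases "m = 0") (simp_all add: divide_le_eq mult.commute)
qed

lemma strict_rank_ge_of_not_mem_pred_set:
  fixes V :: "'b \<Rightarrow> nat \<Rightarrow> real"
  assumes "lab (xs ! n) \<in> {1..K}"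
    and "lab (xs ! n) \<notin> pred_set K (V (xs ! n)) (conf_threshold n (\<lambda>i. V (xs ! i) (lab (xs ! i))) \<alpha>)"
    and "0 < n"
  shows "nat \<lceil>real (n + 1) * (1 - \<alpha>)\<rceil> \<le> strict_rank (\<lambda>b. V b (lab b)) n xs n"
  using card_less_ge_of_conf_threshold_less[of n "\<lambda>i. V (xs ! i) (lab (xs ! i))" \<alpha>] assms
  unfolding pred_set_def strict_rank_def by auto

lemma one_minus_prob_le_prob_of_compl_subset:
  assumes "\<And>x. x \<in> set_pmf p \<Longrightarrow> x \<notin> E \<Longrightarrow> x \<in> B"
  shows "1 - measure_pmf.prob p B \<le> measure_pmf.prob p E"
proof -
  have "measure_pmf.prob p (UNIV - E) \<le> measure_pmf.prob p B"
    using assms by (intro measure_pmf.finite_measure_mono_AE) (auto simp: AE_measure_pmf_iff)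
  then show ?thesis using measure_pmf.prob_compl[of E p] by simp
qed

theorem proposition2:
  fixes A Dtrain :: "'b set"            \<comment> \<open>all cuboids of the image; training cuboids\<close>
    and lab :: "'b \<Rightarrow> nat"             \<comment> \<open>class label of the central pixel\<close>
    and K n k :: nat
    and N :: "'b \<Rightarrow> 'b set"            \<comment> \<open>non-training neighbours of a cuboid\<close>
    and S :: "'b list \<Rightarrow> 'b \<Rightarrow> nat \<Rightarrow> real"  \<comment> \<open>score, may depend on the ordering of calib+test\<close>
    and lam \<alpha> :: real
  defines "U \<equiv> A - Dtrain"
  assumes "finite A" and "Dtrain \<subseteq> A"
    and "\<forall>b\<in>A. lab b \<in> {1..K}"
    and "\<forall>b\<in>U. N b \<subseteq> U"
    and "1 \<le> n" and "n + 1 \<le> card U"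
    and "\<forall>xs\<in>permutations_of_set U. \<forall>ys\<in>permutations_of_set U. S xs = S ys"
    and "0 \<le> lam" and "lam \<le> 1"
    and "0 < \<alpha>" and "\<alpha> < 1"
  shows "measure_pmf.prob (pmf_of_set (permutations_of_set U))
           {xs. lab (xs ! n) \<in>
                  pred_set K (SAO lam N (S xs) k (xs ! n))
                    (conf_threshold n (\<lambda>i. SAO lam N (S xs) k (xs ! i) (lab (xs ! i))) \<alpha>)}
         \<ge> 1 - \<alpha>"
proof -
  define q where "q = nat \<lceil>real (n + 1) * (1 - \<alpha>)\<rceil>"
  have "finite U" "n < card U" using \<open>finite A\<close> \<open>n + 1 \<le> card U\<close> unfolding U_def by simp_all
  then obtain ys0 where ys0: "ys0 \<in> permutations_of_set U" by fastforce
  define V where "V = SAO lam N (S ys0) k"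
  let ?covered = "{xs. lab (xs ! n) \<in>
                  pred_set K (SAO lam N (S xs) k (xs ! n))
                    (conf_threshold n (\<lambda>i. SAO lam N (S xs) k (xs ! i) (lab (xs ! i))) \<alpha>)}"
  let ?high_rank = "{xs. q \<le> strict_rank (\<lambda>b. V b (lab b)) n xs n}"
  have miscovered: "xs \<in> ?high_rank" if xs: "xs \<in> permutations_of_set U" "xs \<notin> ?covered" for xs
  proof -
    have "S xs = S ys0"
      using \<open>\<forall>xs\<in>permutations_of_set U. \<forall>ys\<in>permutations_of_set U. S xs = S ys\<close> xs(1) ys0 by blast
    moreover have "xs ! n \<in> U"
      using xs(1) \<open>n < card U\<close> length_finite_permutations_of_set permutations_of_setD(1)
      by (metis nth_mem)
    then have "lab (xs ! n) \<in> {1..K}" using \<open>\<forall>b\<in>A. lab b \<in> {1..K}\<close> unfolding U_def by blast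
    ultimately show ?thesis
      using strict_rank_ge_of_not_mem_pred_set[of lab xs n K V \<alpha>] xs(2) \<open>1 \<le> n\<close>
      unfolding V_def q_def by simp
  qed
  have "1 - \<alpha> \<le> 1 - measure_pmf.prob (pmf_of_set (permutations_of_set U)) ?high_rank"
    using prob_strict_rank_ge_last_le[OF \<open>finite U\<close> \<open>n < card U\<close>, of q "\<lambda>b. V b (lab b)"]
      diff_nat_ceiling_mult_div_le[of \<alpha> "n + 1"] \<open>0 < \<alpha>\<close> \<open>\<alpha> < 1\<close>
    unfolding q_def by linarith
  also have "\<dots> \<le> measure_pmf.prob (pmf_of_set (permutations_of_set U)) ?covered"
    using miscovered \<open>finite U\<close> by (intro one_minus_prob_le_prob_of_compl_subset) simp
  finally show ?thesis .
qed

end
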